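(* Let $(F_n)_{n\ge 0}$ be the Fibonacci sequence with $F_0=0$, $F_1=1$, $F_n=F_{n-1}+F_{n-2}$ for $n\ge2$. For all integers $k\ge 0$ and $m\ge 0$, $$[\underbrace{4,4,\dots,4}_{m},\,2k+3]=\frac{F_{3m+4}+k\,F_{3m+3}}{F_{3m+1}+k\,F_{3m}},$$ where the continued fraction has $m+1$ entries $a_0,\dots,a_m$ with $a_i=4$ for $0\le i<m$ and $a_m=2k+3$.
   Context: For numbers $a_0,a_1,\dots,a_m$, the finite simple continued fraction $[a_0,a_1,\dots,a_m]$ denotes $a_0+\cfrac{1}{a_1+\cfrac{1}{\ddots+\cfrac{1}{a_m}}}$, evaluated as a rational number; $[a_0]=a_0$. *)

theory Defs
  imports Complex_Main "HOL-Number_Theory.Fib"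
begin

text \<open>Finite simple continued fraction [a0, a1, ..., am] evaluated as a rational number;
  [a0] = a0. The empty list is given the (irrelevant) value 0.\<close>
fun cfrac :: "rat list \<Rightarrow> rat" where
  "cfrac [] = 0"
| "cfrac [a] = a"
| "cfrac (a # b # xs) = a + 1 / cfrac (b # xs)"

end

theory Submission
  imports Defs
begin

text \<open>Prepending a 4 maps a value \<open>N / D\<close> to \<open>(4 N + D) / N\<close>, and the Fibonacci identity
  \<open>F (n + 6) = 4 F (n + 3) + F n\<close> shows that the pairs \<open>(F (3m + j), F (3m + j - 3))\<close>
  transform in exactly this way. So the formula follows by induction on \<open>m\<close>; it holds for
  every rational \<open>r \<ge> 0\<close> in place of \<open>k\<close>, which keeps all denominators positive.\<close>

lemma fib_add_6: "fib (n + 6) = 4 * fib (n + 3) + fib n"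
  by (simp add: numeral_eq_Suc)

lemma cfrac_Cons: "xs \<noteq> [] \<Longrightarrow> cfrac (a # xs) = a + 1 / cfrac xs"
  by (cases xs) auto

lemma cfrac_replicate_Suc_snoc:
  "cfrac (replicate (Suc m) a @ [x]) = a + 1 / cfrac (replicate m a @ [x])"
  by (simp add: cfrac_Cons)

lemma cfrac_replicate_4_snoc:
  fixes r :: rat
  assumes "r \<ge> 0"
  shows "cfrac (replicate m 4 @ [2 * r + 3]) =
    (of_nat (fib (3*m+4)) + r * of_nat (fib (3*m+3))) /
    (of_nat (fib (3*m+1)) + r * of_nat (fib (3*m)))"
proof (induction m)
  case 0
  show ?case by (simp add: numeral_eq_Suc)
next
  case (Suc m)
  define N :: rat where "N = of_nat (fib (3*m+4)) + r * of_nat (fib (3*m+3))"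
  define D :: rat where "D = of_nat (fib (3*m+1)) + r * of_nat (fib (3*m))"
  have "N > 0"
    unfolding N_def using \<open>r \<ge> 0\<close> by (simp add: add_pos_nonneg fib_neq_0_nat)
  have "cfrac (replicate (Suc m) 4 @ [2 * r + 3]) = 4 + 1 / (N / D)"
    unfolding cfrac_replicate_Suc_snoc Suc.IH N_def D_def ..
  also have "\<dots> = (4 * N + D) / N"
    using \<open>N > 0\<close> by (simp add: field_simps)
  also have "4 * N + D = of_nat (fib (3*m+1 + 6)) + r * of_nat (fib (3*m + 6))"
    unfolding fib_add_6 N_def D_def by (simp add: algebra_simps)
  finally show ?case
    by (simp add: N_def add.commute)
qed

theorem theorem2:
  fixes k m :: nat
  shows "cfrac (replicate m 4 @ [2 * of_nat k + 3]) =
    (of_nat (fib (3*m+4)) + of_nat k * of_nat (fib (3*m+3))) /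
    (of_nat (fib (3*m+1)) + of_nat k * of_nat (fib (3*m)))"
  using cfrac_replicate_4_snoc[of "of_nat k" m] by simp

end
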